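(* Fix $c>0$, let $\Phi\in\Omega(n,\lfloor c2^n\rfloor)$ and let $Y_n$ be the number of iterations of PUR on $\Phi$. Then \[\lim_{k\to-\infty}\ \liminf_{n\to\infty}\ \Pr\big[Y_n>\lfloor\log_2 n\rfloor+k\ \big|\ \Phi\text{ is unsatisfiable}\big]=1,\] where $k$ ranges over the integers.
   Context: $\mathcal H_n$ is the set of pairs $(P,S)$ with $P\in\{\emptyset,\{1\},\dots,\{n\}\}$, $S\subseteq\{1,\dots,n\}$, $(P,S)\ne(\emptyset,\emptyset)$, representing the Horn clause $\bigvee_{i\in P}x_i\vee\bigvee_{j\in S}\neg x_j$ (so $|\mathcal H_n|\sim n2^n$; the paper writes this number as $(n+2)2^n-1$); $\Omega(n,m)$ is the distribution of the conjunction of $m$ clauses drawn independently, uniformly with repetition from $\mathcal H_n$. Algorithm PUR on a Horn formula $\Phi$: if $\Phi$ has no positive unit clause (single literal $x_i$), accept. Otherwise choose uniformly at random a positive unit clause $x_i$; if $\Phi$ contains the clause $\neg x_i$, reject; otherwise set $x_i=1$ (delete clauses containing $x_i$, delete $\neg x_i$ from the others) and recurse. PUR accepts iff $\Phi$ is satisfiable. The number of iterations is the number of variables set to $1$ before PUR halts. *)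

theory Defs
  imports "HOL-Probability.Probability"
begin

text \<open>A Horn clause (P,S): P = None (no positive literal) or Some i (positive literal x_i),
  S the set of indices of negated variables.\<close>
type_synonym clause = "nat option \<times> nat set"

definition horn_clauses :: "nat \<Rightarrow> clause set" where
  "horn_clauses n = {(P, S). (P = None \<or> (\<exists>i\<in>{1..n}. P = Some i)) \<and> S \<subseteq> {1..n}
                              \<and> (P, S) \<noteq> (None, {})}"

definition clause_sat :: "(nat \<Rightarrow> bool) \<Rightarrow> clause \<Rightarrow> bool" where
  "clause_sat a C = ((\<exists>i. fst C = Some i \<and> a i) \<or> (\<exists>j\<in>snd C. \<not> a j))"

definition satisfiable :: "clause list \<Rightarrow> bool" where
  "satisfiable \<Phi> = (\<exists>a. \<forall>C\<in>set \<Phi>. clause_sat a C)"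

text \<open>Omega(n,m): conjunction of m clauses drawn independently and uniformly with repetition
  from horn_clauses n, i.e. a uniformly random length-m list over horn_clauses n.\<close>
definition Omega :: "nat \<Rightarrow> nat \<Rightarrow> clause list pmf" where
  "Omega n m = pmf_of_set {xs. length xs = m \<and> set xs \<subseteq> horn_clauses n}"

text \<open>Formulas as (finite) sets of clauses for the algorithm.\<close>
definition vars :: "clause set \<Rightarrow> nat set" where
  "vars F = (\<Union>(P, S)\<in>F. set_option P \<union> S)"

definition pos_units :: "clause set \<Rightarrow> nat set" where
  "pos_units F = {i. (Some i, {}) \<in> F}"

definition set_true :: "nat \<Rightarrow> clause set \<Rightarrow> clause set" where
  "set_true i F = (\<lambda>(P, S). (P, S - {i})) ` {C \<in> F. fst C \<noteq> Some i}"

text \<open>One run of PUR, returning (accepted?, number of iterations). The natural-number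
  argument is fuel; PUR below supplies more fuel than the number of variables, and every
  iteration eliminates one variable, so the fuel is never exhausted.\<close>
primrec pur_fuel :: "nat \<Rightarrow> clause set \<Rightarrow> (bool \<times> nat) pmf" where
  "pur_fuel 0 F = return_pmf (True, 0)"
| "pur_fuel (Suc k) F =
     (if pos_units F = {} then return_pmf (True, 0)
      else bind_pmf (pmf_of_set (pos_units F)) (\<lambda>i.
             if (None, {i}) \<in> F then return_pmf (False, 0)
             else map_pmf (\<lambda>(b, t). (b, Suc t)) (pur_fuel k (set_true i F))))"

definition PUR :: "clause set \<Rightarrow> (bool \<times> nat) pmf" where
  "PUR F = pur_fuel (Suc (card (vars F))) F"

definition PUR_on_Omega :: "nat \<Rightarrow> nat \<Rightarrow> (clause list \<times> (bool \<times> nat)) pmf" where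
  "PUR_on_Omega n m = bind_pmf (Omega n m) (\<lambda>\<Phi>. map_pmf (\<lambda>r. (\<Phi>, r)) (PUR (set \<Phi>)))"

definition cond_prob_iter :: "real \<Rightarrow> nat \<Rightarrow> int \<Rightarrow> real" where
  "cond_prob_iter c n k =
     (let D = PUR_on_Omega n (nat \<lfloor>c * 2 ^ n\<rfloor>) in
        measure_pmf.prob D {(\<Phi>, b, y). \<not> satisfiable \<Phi> \<and> int y > \<lfloor>log 2 (real n)\<rfloor> + k}
        / measure_pmf.prob D {(\<Phi>, r). \<not> satisfiable \<Phi>})"

end

theory Submission
  imports Defs "HOL-Real_Asymp.Real_Asymp" "HOL-Library.Discrete_Functions"
begin

text \<open>On an unsatisfiable formula PUR rejects, and it rejects within t iterations only if the
  first t+1 variables it sets contain all variables of some negative clause. With the reject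
  test dropped, the order in which PUR sets variables depends only on the definite clauses.
  Hence the clause at any fixed position is uniform over H_n independently of that order, and
  it refutes within t iterations only if it is one of the at most 2^(t+1) negative clauses over
  the first t+1 variables set. Summing over the m positions bounds the probability of an
  unsatisfiable formula with Y_n \<le> t by m 2^(t+1) / |H_n|, roughly c 2^(t+1) / n, which is
  O(2^k) for t = floor(log n) + k.

  It remains to bound Pr[unsatisfiable] away from 0. Cut the first half of the clauses into
  R = floor(log n) + 1 blocks of about m / (4 (j+1)^2) clauses. With probability at least
  1 - exp(-c 2^j / (16 (j+1)^2)) block j contains a definite clause whose negative variables
  are among the j variables forced so far and whose positive variable is new, forcing one more
  variable; the product of these probabilities is bounded below uniformly in R. Given R forced
  variables, with probability at least 1 - exp(-c/8) the second half contains one of the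
  2^R - 1 \<ge> n negative clauses over them.\<close>

section \<open>Positive unit propagation\<close>

definition definite :: "clause set \<Rightarrow> clause set" where
  "definite F = {C \<in> F. fst C \<noteq> None}"

text \<open>The variables PUR sets, in order, when its reject test is dropped.\<close>
primrec prop_seq_fuel :: "nat \<Rightarrow> clause set \<Rightarrow> nat list pmf" where
  "prop_seq_fuel 0 F = return_pmf []"
| "prop_seq_fuel (Suc k) F =
     (if pos_units F = {} then return_pmf []
      else bind_pmf (pmf_of_set (pos_units F))
             (\<lambda>i. map_pmf (Cons i) (prop_seq_fuel k (set_true i F))))"

definition prop_seq :: "clause set \<Rightarrow> nat list pmf" where
  "prop_seq F = prop_seq_fuel (Suc (card (vars F))) F"

definition refuted_within :: "clause set \<Rightarrow> nat \<Rightarrow> nat list set" where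
  "refuted_within F t = {s. \<exists>S. (None, S) \<in> F \<and> S \<subseteq> set (take t s)}"

lemma finite_pos_units: "finite F \<Longrightarrow> finite (pos_units F)"
  unfolding pos_units_def
  by (rule finite_subset[of _ "(\<lambda>C. the (fst C)) ` F"]) force+

lemma finite_set_true: "finite F \<Longrightarrow> finite (set_true i F)"
  by (simp add: set_true_def)

lemma finite_snd_set_true: "\<forall>C\<in>F. finite (snd C) \<Longrightarrow> \<forall>C\<in>set_true i F. finite (snd C)"
  by (auto simp: set_true_def)

lemma vars_set_true: "vars (set_true i F) \<subseteq> vars F - {i}"
  unfolding vars_def set_true_def by force

lemma pos_units_subset_vars: "pos_units F \<subseteq> vars F"
  unfolding vars_def pos_units_def by force

lemma vars_mono: "F \<subseteq> G \<Longrightarrow> vars F \<subseteq> vars G"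
  unfolding vars_def by auto

lemma finite_vars: "finite F \<Longrightarrow> \<forall>C\<in>F. finite (snd C) \<Longrightarrow> finite (vars F)"
  unfolding vars_def by auto

lemma card_vars_set_true_less:
  assumes "finite F" "\<forall>C\<in>F. finite (snd C)" "i \<in> pos_units F"
  shows "card (vars (set_true i F)) < card (vars F)"
proof -
  have fin: "finite (vars F)" using finite_vars assms by auto
  have "card (vars (set_true i F)) \<le> card (vars F - {i})"
    by (rule card_mono) (use fin vars_set_true in auto)
  also have "\<dots> < card (vars F)"
    using fin assms(3) pos_units_subset_vars by (metis card_Diff1_less subsetD)
  finally show ?thesis .
qed

lemma clause_sat_all_false:
  assumes "pos_units F = {}" "(None, {}) \<notin> F" "C \<in> F"
  shows "clause_sat (\<lambda>_. False) C"
proof (cases C)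
  case (Pair P S)
  show ?thesis
  proof (cases "S = {}")
    case True
    with assms Pair obtain i where "P = Some i" by (cases P) auto
    with assms Pair True show ?thesis by (auto simp: pos_units_def)
  qed (auto simp: Pair clause_sat_def)
qed

lemma empty_clause_notin_set_true:
  assumes "(None, {}) \<notin> F" "(None, {i}) \<notin> F"
  shows "(None, {}) \<notin> set_true i F"
proof
  assume "(None, {}) \<in> set_true i F"
  then obtain S where "(None, S) \<in> F" "S - {i} = {}"
    unfolding set_true_def by auto
  then have "(None, {}) \<in> F \<or> (None, {i}) \<in> F"
    by (metis Diff_eq_empty_iff subset_singletonD)
  with assms show False by blast
qed

lemma clause_sat_set_true:
  assumes "\<forall>C\<in>set_true i F. clause_sat a C" "C \<in> F"
  shows "clause_sat (a(i := True)) C"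
proof (cases C)
  case (Pair P S)
  show ?thesis
  proof (cases "P = Some i")
    case False
    then have "(P, S - {i}) \<in> set_true i F"
      using assms(2) Pair unfolding set_true_def by force
    then have "clause_sat a (P, S - {i})" using assms(1) by blast
    then show ?thesis using Pair False by (auto simp: clause_sat_def)
  qed (simp add: Pair clause_sat_def)
qed

lemma satisfiable_if_pur_fuel_accepts:
  assumes "finite F" "\<forall>C\<in>F. finite (snd C)" "(None, {}) \<notin> F" "card (vars F) < k"
    and "(True, y) \<in> set_pmf (pur_fuel k F)"
  shows "\<exists>a. \<forall>C\<in>F. clause_sat a C"
  using assms
proof (induction k arbitrary: F y)
  case (Suc k)
  show ?case
  proof (cases "pos_units F = {}")
    case True
    then show ?thesis using clause_sat_all_false Suc.prems(3) by blast
  next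
    case False
    with Suc.prems(1,5) obtain i t where i: "i \<in> pos_units F" "(None, {i}) \<notin> F"
      and t: "(True, t) \<in> set_pmf (pur_fuel k (set_true i F))"
      by (auto simp: finite_pos_units split: if_splits)
    have "card (vars (set_true i F)) < k"
      using card_vars_set_true_less[OF Suc.prems(1,2) i(1)] Suc.prems(4) by simp
    then obtain a where "\<forall>C\<in>set_true i F. clause_sat a C"
      using Suc.IH[OF finite_set_true[OF Suc.prems(1)] finite_snd_set_true[OF Suc.prems(2)]
          empty_clause_notin_set_true[OF Suc.prems(3) i(2)] _ t] by blast
    then show ?thesis using clause_sat_set_true by blast
  qed
qed simp

lemma PUR_accepts_imp_satisfiable:
  assumes "finite F" "\<forall>C\<in>F. finite (snd C)" "(None, {}) \<notin> F" "(True, y) \<in> set_pmf (PUR F)"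
  shows "\<exists>a. \<forall>C\<in>F. clause_sat a C"
  using satisfiable_if_pur_fuel_accepts[OF assms(1-3) _ assms(4)[unfolded PUR_def]] by simp

lemma measure_pmf_prob_bind:
  "measure_pmf.prob (bind_pmf M f) A = measure_pmf.expectation M (\<lambda>x. measure_pmf.prob (f x) A)"
  unfolding measure_pmf_bind
  by (rule measure_pmf.measure_bind[where N="count_space UNIV"])
     (auto simp: measurable_pmf_measure1 space_subprob_algebra
       intro!: measurable_count_space_eq1[THEN iffD2] prob_space_imp_subprob_space
         measure_pmf.prob_space_axioms)

lemma measure_pmf_prob_bind_pmf_of_set:
  assumes "finite S" "S \<noteq> {}"
  shows "measure_pmf.prob (bind_pmf (pmf_of_set S) f) A
    = (\<Sum>x\<in>S. measure_pmf.prob (f x) A) / card S"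
  using assms by (simp add: measure_pmf_prob_bind integral_pmf_of_set)

lemma refuted_within_set_true:
  "refuted_within (set_true i F) t \<subseteq> Cons i -` refuted_within F (Suc t)"
proof
  fix s assume "s \<in> refuted_within (set_true i F) t"
  then obtain S where "(None, S) \<in> set_true i F" "S \<subseteq> set (take t s)"
    unfolding refuted_within_def by blast
  then obtain S0 where "(None, S0) \<in> F" "S = S0 - {i}"
    unfolding set_true_def by auto
  with \<open>S \<subseteq> set (take t s)\<close> show "s \<in> Cons i -` refuted_within F (Suc t)"
    unfolding refuted_within_def by auto
qed

lemma pur_step_reject_within_le:
  assumes "\<And>t. measure_pmf.prob M {(b, y). \<not> b \<and> y \<le> t}
      \<le> measure_pmf.prob N (refuted_within (set_true i F) (Suc t))"
  shows "measure_pmf.prob (if (None, {i}) \<in> F then return_pmf (False, 0)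
        else map_pmf (\<lambda>(b, y). (b, Suc y)) M) {(b, y). \<not> b \<and> y \<le> t}
    \<le> measure_pmf.prob (map_pmf (Cons i) N) (refuted_within F (Suc t))"
proof (cases "(None, {i}) \<in> F")
  case True
  then have "Cons i -` refuted_within F (Suc t) = UNIV"
    by (auto simp: refuted_within_def)
  then show ?thesis using True by simp
next
  case False
  show ?thesis
  proof (cases t)
    case 0
    then have "(\<lambda>(b, y). (b, Suc y)) -` {(b, y). \<not> b \<and> y \<le> t} = {}" by auto
    then show ?thesis using False by simp
  next
    case (Suc t')
    then have "(\<lambda>(b, y). (b, Suc y)) -` {(b, y). \<not> b \<and> y \<le> t} = {(b, y). \<not> b \<and> y \<le> t'}"
      by auto
    then have "measure_pmf.prob (if (None, {i}) \<in> F then return_pmf (False, 0)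
        else map_pmf (\<lambda>(b, y). (b, Suc y)) M) {(b, y). \<not> b \<and> y \<le> t}
      = measure_pmf.prob M {(b, y). \<not> b \<and> y \<le> t'}"
      using False by simp
    also have "\<dots> \<le> measure_pmf.prob N (refuted_within (set_true i F) (Suc t'))"
      by (rule assms)
    also have "\<dots> \<le> measure_pmf.prob N (Cons i -` refuted_within F (Suc t))"
      using refuted_within_set_true Suc by (intro measure_pmf.finite_measure_mono) auto
    finally show ?thesis by simp
  qed
qed

text \<open>The coupling: PUR and the propagation sequence make the same random choices.\<close>
lemma pur_fuel_reject_within_le:
  assumes "finite F"
  shows "measure_pmf.prob (pur_fuel k F) {(b, y). \<not> b \<and> y \<le> t}
     \<le> measure_pmf.prob (prop_seq_fuel k F) (refuted_within F (Suc t))"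
  using assms
proof (induction k arbitrary: F t)
  case (Suc k)
  show ?case
  proof (cases "pos_units F = {}")
    case False
    have fin: "finite (pos_units F)" using finite_pos_units Suc.prems by auto
    have "measure_pmf.prob (pur_fuel (Suc k) F) {(b, y). \<not> b \<and> y \<le> t}
        = (\<Sum>i\<in>pos_units F. measure_pmf.prob (if (None, {i}) \<in> F then return_pmf (False, 0)
            else map_pmf (\<lambda>(b, y). (b, Suc y)) (pur_fuel k (set_true i F))) {(b, y). \<not> b \<and> y \<le> t})
          / card (pos_units F)"
      using False fin by (simp add: measure_pmf_prob_bind_pmf_of_set)
    also have "\<dots> \<le> (\<Sum>i\<in>pos_units F. measure_pmf.prob
          (map_pmf (Cons i) (prop_seq_fuel k (set_true i F))) (refuted_within F (Suc t)))
          / card (pos_units F)"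
      using Suc.IH[OF finite_set_true[OF Suc.prems]]
      by (intro divide_right_mono sum_mono pur_step_reject_within_le) auto
    also have "\<dots> = measure_pmf.prob (prop_seq_fuel (Suc k) F) (refuted_within F (Suc t))"
      using False fin by (simp add: measure_pmf_prob_bind_pmf_of_set del: measure_map_pmf)
    finally show ?thesis .
  qed simp
qed simp

lemma pos_units_definite: "pos_units (definite F) = pos_units F"
  by (auto simp: pos_units_def definite_def)

lemma set_true_definite: "set_true i (definite F) = definite (set_true i F)"
  unfolding set_true_def definite_def by force

lemma prop_seq_fuel_definite: "prop_seq_fuel k (definite F) = prop_seq_fuel k F"
  by (induction k arbitrary: F) (simp_all add: pos_units_definite set_true_definite)

text \<open>Every iteration sets a variable of F.\<close>
lemma prop_seq_fuel_cong:
  assumes "finite F" "\<forall>C\<in>F. finite (snd C)" "card (vars F) < k" "card (vars F) < k'"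
  shows "prop_seq_fuel k F = prop_seq_fuel k' F"
  using assms
proof (induction k arbitrary: k' F)
  case (Suc k)
  then obtain k'' where k': "k' = Suc k''" by (cases k') auto
  have IH: "prop_seq_fuel k (set_true i F) = prop_seq_fuel k'' (set_true i F)"
    if "i \<in> pos_units F" for i
  proof (rule Suc.IH[OF finite_set_true[OF Suc.prems(1)] finite_snd_set_true[OF Suc.prems(2)]])
    show "card (vars (set_true i F)) < k" "card (vars (set_true i F)) < k''"
      using card_vars_set_true_less[OF Suc.prems(1,2) that] Suc.prems(3,4) k' by linarith+
  qed
  show ?case
    unfolding k' prop_seq_fuel.simps
    by (intro if_cong refl bind_pmf_cong) (simp_all add: IH finite_pos_units[OF Suc.prems(1)])
qed simp

lemma PUR_reject_within_le:
  assumes "finite F" "\<forall>C\<in>F. finite (snd C)"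
  shows "measure_pmf.prob (PUR F) {(b, y). \<not> b \<and> y \<le> t}
     \<le> measure_pmf.prob (prop_seq (definite F)) (refuted_within F (Suc t))"
proof -
  have fin: "finite (definite F)" "\<forall>C\<in>definite F. finite (snd C)"
    using assms by (auto simp: definite_def)
  have "card (vars (definite F)) \<le> card (vars F)"
    using assms by (intro card_mono finite_vars vars_mono) (auto simp: definite_def)
  then have "prop_seq (definite F) = prop_seq_fuel (Suc (card (vars F))) (definite F)"
    unfolding prop_seq_def by (intro prop_seq_fuel_cong fin) auto
  also have "\<dots> = prop_seq_fuel (Suc (card (vars F))) F"
    by (rule prop_seq_fuel_definite)
  finally show ?thesis
    unfolding PUR_def by (rule ssubst) (rule pur_fuel_reject_within_le[OF assms(1)])
qed

section \<open>Counting Horn clauses and random lists\<close>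

lemma horn_clauses_eq:
  "horn_clauses n = insert None (Some ` {1..n}) \<times> Pow {1..n} - {(None, {})}"
  unfolding horn_clauses_def by auto

lemma finite_horn_clauses: "finite (horn_clauses n)"
  unfolding horn_clauses_eq by auto

lemma card_horn_clauses: "card (horn_clauses n) = (n + 1) * 2 ^ n - 1"
proof -
  have "card (insert None (Some ` {1..n}) \<times> Pow {1..n}) = (n + 1) * 2 ^ n"
    by (simp add: card_cartesian_product card_image card_Pow)
  then show ?thesis unfolding horn_clauses_eq
    by (subst card_Diff_singleton) auto
qed

lemma card_horn_clauses_bounds:
  "n * 2 ^ n \<le> card (horn_clauses n)" "card (horn_clauses n) \<le> (n + 1) * 2 ^ n"
proof -
  have "1 \<le> (2::nat) ^ n" by simp
  then show "n * 2 ^ n \<le> card (horn_clauses n)" "card (horn_clauses n) \<le> (n + 1) * 2 ^ n"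
    unfolding card_horn_clauses by (simp_all add: distrib_right, linarith)
qed

lemma card_horn_clauses_real_bounds:
  "real n * 2 ^ n \<le> card (horn_clauses n)" "card (horn_clauses n) \<le> (real n + 1) * 2 ^ n"
proof -
  have "real (n * 2 ^ n) \<le> card (horn_clauses n)" "card (horn_clauses n) \<le> real ((n + 1) * 2 ^ n)"
    using card_horn_clauses_bounds by (simp_all only: of_nat_le_iff)
  then show "real n * 2 ^ n \<le> card (horn_clauses n)" "card (horn_clauses n) \<le> (real n + 1) * 2 ^ n"
    by (simp_all add: distrib_right)
qed

lemma card_horn_clauses_pos: "n \<ge> 1 \<Longrightarrow> card (horn_clauses n) > 0"
  by (rule less_le_trans[OF _ card_horn_clauses_bounds(1)]) simp

lemma empty_clause_notin_horn_clauses: "(None, {}) \<notin> horn_clauses n"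
  unfolding horn_clauses_def by auto

lemma snd_horn_clause_subset: "C \<in> horn_clauses n \<Longrightarrow> snd C \<subseteq> {1..n}"
  unfolding horn_clauses_def by auto

lemma finite_snd_horn_clause: "C \<in> horn_clauses n \<Longrightarrow> finite (snd C)"
  by (meson finite_atLeastAtMost finite_subset snd_horn_clause_subset)

lemma PUR_rejects_unsatisfiable:
  assumes "set \<Phi> \<subseteq> horn_clauses n" "\<not> satisfiable \<Phi>" "(b, y) \<in> set_pmf (PUR (set \<Phi>))"
  shows "\<not> b"
proof
  assume b
  have "\<forall>C\<in>set \<Phi>. finite (snd C)" "(None, {}) \<notin> set \<Phi>"
    using assms(1) finite_snd_horn_clause empty_clause_notin_horn_clauses by blast+
  with \<open>b\<close> assms(3) have "\<exists>a. \<forall>C\<in>set \<Phi>. clause_sat a C"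
    by (intro PUR_accepts_imp_satisfiable[of "set \<Phi>" y]) auto
  with assms(2) show False unfolding satisfiable_def by blast
qed

definition lists_of_len :: "'a set \<Rightarrow> nat \<Rightarrow> 'a list set" where
  "lists_of_len H m = {xs. set xs \<subseteq> H \<and> length xs = m}"

lemma finite_lists_of_len: "finite H \<Longrightarrow> finite (lists_of_len H m)"
  unfolding lists_of_len_def by (rule finite_lists_length_eq)

lemma card_lists_of_len: "finite H \<Longrightarrow> card (lists_of_len H m) = card H ^ m"
  unfolding lists_of_len_def by (rule card_lists_length_eq)

lemma lists_of_len_nonempty: "H \<noteq> {} \<Longrightarrow> lists_of_len H m \<noteq> {}"
proof -
  assume "H \<noteq> {}"
  then obtain x where "x \<in> H" by blast
  then have "replicate m x \<in> lists_of_len H m" by (auto simp: lists_of_len_def)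
  then show ?thesis by blast
qed

lemma Omega_eq: "Omega n m = pmf_of_set (lists_of_len (horn_clauses n) m)"
  by (simp add: Omega_def lists_of_len_def conj_commute)

lemma card_append_split:
  assumes "finite H"
  shows "card {zs \<in> lists_of_len H (a + b). Q zs}
    = (\<Sum>xs\<in>lists_of_len H a. card {ys \<in> lists_of_len H b. Q (xs @ ys)})"
proof -
  let ?S = "SIGMA xs:lists_of_len H a. {ys \<in> lists_of_len H b. Q (xs @ ys)}"
  have eq: "{zs \<in> lists_of_len H (a + b). Q zs} = (\<lambda>(xs, ys). xs @ ys) ` ?S"
  proof
    show "{zs \<in> lists_of_len H (a + b). Q zs} \<subseteq> (\<lambda>(xs, ys). xs @ ys) ` ?S"
    proof
      fix zs assume "zs \<in> {zs \<in> lists_of_len H (a + b). Q zs}"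
      then have "(take a zs, drop a zs) \<in> ?S"
        using set_take_subset[of a zs] set_drop_subset[of a zs] by (auto simp: lists_of_len_def)
      then show "zs \<in> (\<lambda>(xs, ys). xs @ ys) ` ?S"
        by (metis (no_types, lifting) append_take_drop_id case_prod_conv image_eqI)
    qed
  qed (auto simp: lists_of_len_def)
  have "inj_on (\<lambda>(xs, ys). xs @ ys) ?S"
  proof (rule inj_onI)
    fix p q assume "p \<in> ?S" "q \<in> ?S" "(\<lambda>(xs, ys). xs @ ys) p = (\<lambda>(xs, ys). xs @ ys) q"
    then show "p = q"
      by (cases p, cases q) (simp add: lists_of_len_def append_eq_append_conv)
  qed
  then have "card {zs \<in> lists_of_len H (a + b). Q zs} = card ?S"
    unfolding eq by (rule card_image)
  also have "\<dots> = (\<Sum>xs\<in>lists_of_len H a. card {ys \<in> lists_of_len H b. Q (xs @ ys)})"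
    using finite_lists_of_len[OF assms] by (intro card_SigmaI) auto
  finally show ?thesis .
qed

lemma card_take_prefix:
  assumes "finite H" "b \<le> m"
  shows "card {ws \<in> lists_of_len H m. Q (take b ws)}
    = card {us \<in> lists_of_len H b. Q us} * card H ^ (m - b)"
proof -
  have "card {ws \<in> lists_of_len H m. Q (take b ws)}
      = (\<Sum>us\<in>lists_of_len H b. card {vs \<in> lists_of_len H (m - b). Q (take b (us @ vs))})"
    using card_append_split[OF assms(1), of b "m - b"] assms(2) by simp
  also have "\<dots> = (\<Sum>us\<in>lists_of_len H b. if Q us then card H ^ (m - b) else 0)"
  proof (intro sum.cong refl)
    fix us assume "us \<in> lists_of_len H b"
    then have "take b (us @ vs) = us" for vs by (simp add: lists_of_len_def)
    then show "card {vs \<in> lists_of_len H (m - b). Q (take b (us @ vs))}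
        = (if Q us then card H ^ (m - b) else 0)"
      by (simp add: card_lists_of_len[OF assms(1)])
  qed
  also have "\<dots> = card {us \<in> lists_of_len H b. Q us} * card H ^ (m - b)"
    by (simp add: sum.If_cases finite_lists_of_len[OF assms(1)] Int_def)
  finally show ?thesis .
qed

lemma card_lists_meeting:
  assumes "finite H" "T \<subseteq> H"
  shows "card {us \<in> lists_of_len H b. set us \<inter> T \<noteq> {}} = card H ^ b - (card H - card T) ^ b"
proof -
  have "{us \<in> lists_of_len H b. set us \<inter> T \<noteq> {}} = lists_of_len H b - lists_of_len (H - T) b"
    "lists_of_len (H - T) b \<subseteq> lists_of_len H b"
    by (auto simp: lists_of_len_def)
  then show ?thesis
    using assms card_lists_of_len[of H b] card_lists_of_len[of "H - T" b]
      finite_lists_of_len[of "H - T" b]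
    by (simp add: card_Diff_subset finite_subset)
qed

lemma card_prefix_meets_ge:
  assumes H: "finite H" "card H > 0" and b: "b \<le> m" and T: "T \<subseteq> H" "f \<le> card T"
  shows "(1 - (1 - real f / card H) ^ b) * card (lists_of_len H m)
    \<le> card {ws \<in> lists_of_len H m. set (take b ws) \<inter> T \<noteq> {}}"
proof -
  define N where "N = card H"
  have N: "real N > 0" using H by (simp add: N_def)
  have cT: "card T \<le> N" unfolding N_def using T H card_mono by blast
  have "card {ws \<in> lists_of_len H m. set (take b ws) \<inter> T \<noteq> {}}
      = (N ^ b - (N - card T) ^ b) * N ^ (m - b)"
    using card_take_prefix[OF H(1) b, of "\<lambda>us. set us \<inter> T \<noteq> {}"] card_lists_meeting[OF H(1) T(1)]
    by (simp add: N_def)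
  then have lhs: "real (card {ws \<in> lists_of_len H m. set (take b ws) \<inter> T \<noteq> {}})
      = (real N ^ b - (real N - card T) ^ b) * real N ^ (m - b)"
    using cT by (simp add: of_nat_diff power_mono)
  have "(1 - real f / N) ^ b = (real N - f) ^ b / real N ^ b"
    using N by (simp add: power_divide field_simps)
  moreover have "real N ^ m = real N ^ b * real N ^ (m - b)"
    using b by (simp flip: power_add)
  ultimately have "(1 - (1 - real f / N) ^ b) * card (lists_of_len H m)
      = (real N ^ b - (real N - f) ^ b) * real N ^ (m - b)"
    using N by (simp add: card_lists_of_len[OF H(1)] N_def field_simps)
  also have "\<dots> \<le> (real N ^ b - (real N - card T) ^ b) * real N ^ (m - b)"
    using T cT by (intro mult_right_mono diff_left_mono power_mono) auto
  finally show ?thesis unfolding lhs N_def .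
qed

lemma card_block_meets_ge:
  assumes H: "finite H" "card H > 0" and ab: "a + b \<le> m"
    and T: "\<And>xs. xs \<in> lists_of_len H a \<Longrightarrow> P xs \<Longrightarrow> T xs \<subseteq> H \<and> f \<le> card (T xs)"
  shows "(1 - (1 - real f / card H) ^ b) * card {zs \<in> lists_of_len H m. P (take a zs)}
    \<le> card {zs \<in> lists_of_len H m. P (take a zs) \<and> set (take b (drop a zs)) \<inter> T (take a zs) \<noteq> {}}"
proof -
  have m: "m = a + (m - a)" using ab by simp
  have L: "card {zs \<in> lists_of_len H m. P (take a zs) \<and> set (take b (drop a zs)) \<inter> T (take a zs) \<noteq> {}}
     = (\<Sum>xs\<in>lists_of_len H a. card {ws \<in> lists_of_len H (m - a). P xs \<and> set (take b ws) \<inter> T xs \<noteq> {}})"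
    using card_append_split[OF H(1), of a "m - a"] m by (simp add: lists_of_len_def cong: conj_cong)
  have R: "card {zs \<in> lists_of_len H m. P (take a zs)}
     = (\<Sum>xs\<in>lists_of_len H a. card {ws \<in> lists_of_len H (m - a). P xs})"
    using card_append_split[OF H(1), of a "m - a"] m by (simp add: lists_of_len_def cong: conj_cong)
  have "(1 - (1 - real f / card H) ^ b) * card {ws \<in> lists_of_len H (m - a). P xs}
      \<le> card {ws \<in> lists_of_len H (m - a). P xs \<and> set (take b ws) \<inter> T xs \<noteq> {}}"
    if "xs \<in> lists_of_len H a" for xs
    using card_prefix_meets_ge[OF H, of b "m - a" "T xs" f] T[OF that] ab by (cases "P xs") auto
  then show ?thesis
    unfolding L R of_nat_sum sum_distrib_left by (intro sum_mono) auto
qed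

lemma sum_nth_swap:
  assumes "p < m" "C \<in> H" "C' \<in> H"
  shows "(\<Sum>\<Phi>\<in>{\<Phi> \<in> lists_of_len H m. \<Phi> ! p = C}. g (\<Phi>[p := C']))
    = (\<Sum>\<Psi>\<in>{\<Psi> \<in> lists_of_len H m. \<Psi> ! p = C'}. g \<Psi>)"
proof (rule sum.reindex_bij_witness[where i="\<lambda>\<Psi>. \<Psi>[p := C]" and j="\<lambda>\<Phi>. \<Phi>[p := C']"])
  fix \<Psi> assume "\<Psi> \<in> {\<Psi> \<in> lists_of_len H m. \<Psi> ! p = C'}"
  then show "(\<Psi>[p := C])[p := C'] = \<Psi>" "\<Psi>[p := C] \<in> {\<Phi> \<in> lists_of_len H m. \<Phi> ! p = C}"
    using assms set_update_subset_insert[of \<Psi> p C] by (auto simp: lists_of_len_def)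
next
  fix \<Phi> assume "\<Phi> \<in> {\<Phi> \<in> lists_of_len H m. \<Phi> ! p = C}"
  then show "(\<Phi>[p := C'])[p := C] = \<Phi>" "\<Phi>[p := C'] \<in> {\<Psi> \<in> lists_of_len H m. \<Psi> ! p = C'}"
    using assms set_update_subset_insert[of \<Phi> p C'] by (auto simp: lists_of_len_def)
qed simp

lemma sum_group_nth:
  assumes "finite H" "p < m"
  shows "(\<Sum>\<Phi>\<in>lists_of_len H m. g \<Phi>) = (\<Sum>C\<in>H. \<Sum>\<Phi>\<in>{\<Phi> \<in> lists_of_len H m. \<Phi> ! p = C}. g \<Phi>)"
  by (rule sum.group[symmetric]) (use assms finite_lists_of_len in \<open>auto simp: lists_of_len_def\<close>)

lemma card_nth_eq:
  assumes "finite H" "p < m" "C \<in> H"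
  shows "real (card {\<Phi> \<in> lists_of_len H m. \<Phi> ! p = C}) = real (card H) ^ m / card H"
proof -
  have "card (lists_of_len H m) = (\<Sum>C'\<in>H. card {\<Phi> \<in> lists_of_len H m. \<Phi> ! p = C'})"
    using sum_group_nth[OF assms(1,2), of "\<lambda>_. 1::nat"] by simp
  also have "\<dots> = card H * card {\<Phi> \<in> lists_of_len H m. \<Phi> ! p = C}"
    using sum_nth_swap[OF assms(2) _ assms(3), of _ "\<lambda>_. 1::nat"] by simp
  finally have "real (card H) ^ m = real (card H) * card {\<Phi> \<in> lists_of_len H m. \<Phi> ! p = C}"
    using card_lists_of_len[OF assms(1)] by (metis of_nat_mult of_nat_power)
  moreover have "card H > 0" using assms by (auto simp: card_gt_0_iff)
  ultimately show ?thesis by (simp add: field_simps)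
qed

lemma prob_PUR_on_Omega:
  assumes "n \<ge> 1"
  shows "measure_pmf.prob (PUR_on_Omega n m) A
    = (\<Sum>\<Phi>\<in>lists_of_len (horn_clauses n) m. measure_pmf.prob (PUR (set \<Phi>)) {r. (\<Phi>, r) \<in> A})
      / card (lists_of_len (horn_clauses n) m)"
proof -
  have "horn_clauses n \<noteq> {}" using card_horn_clauses_pos[OF assms] by auto
  then show ?thesis
    unfolding PUR_on_Omega_def Omega_eq
    by (subst measure_pmf_prob_bind_pmf_of_set)
       (auto simp: finite_lists_of_len finite_horn_clauses lists_of_len_nonempty vimage_def)
qed

lemma prob_PUR_on_Omega_unsat:
  assumes "n \<ge> 1"
  shows "measure_pmf.prob (PUR_on_Omega n m) {(\<Phi>, r). \<not> satisfiable \<Phi>}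
    = card {\<Phi> \<in> lists_of_len (horn_clauses n) m. \<not> satisfiable \<Phi>}
      / card (lists_of_len (horn_clauses n) m)"
proof -
  have "(\<Sum>\<Phi>\<in>lists_of_len (horn_clauses n) m.
          measure_pmf.prob (PUR (set \<Phi>)) {r. (\<Phi>, r) \<in> {(\<Phi>, r). \<not> satisfiable \<Phi>}})
      = (\<Sum>\<Phi>\<in>lists_of_len (horn_clauses n) m. if \<not> satisfiable \<Phi> then 1 else 0)"
    by (intro sum.cong refl) auto
  also have "\<dots> = card {\<Phi> \<in> lists_of_len (horn_clauses n) m. \<not> satisfiable \<Phi>}"
    by (simp add: sum.If_cases finite_lists_of_len finite_horn_clauses Int_def)
  finally show ?thesis by (simp add: prob_PUR_on_Omega[OF assms])
qed

section \<open>Few iterations are unlikely\<close>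

lemma prob_refuted_within_le:
  "measure_pmf.prob M (refuted_within (set \<Phi>) t)
   \<le> (\<Sum>p<length \<Phi>. if fst (\<Phi> ! p) = None
        then measure_pmf.prob M {s. snd (\<Phi> ! p) \<subseteq> set (take t s)} else 0)"
proof -
  let ?I = "{p \<in> {..<length \<Phi>}. fst (\<Phi> ! p) = None}"
  have "refuted_within (set \<Phi>) t \<subseteq> (\<Union>p\<in>?I. {s. snd (\<Phi> ! p) \<subseteq> set (take t s)})"
    unfolding refuted_within_def by (force simp: in_set_conv_nth)
  then have "measure_pmf.prob M (refuted_within (set \<Phi>) t)
      \<le> measure_pmf.prob M (\<Union>p\<in>?I. {s. snd (\<Phi> ! p) \<subseteq> set (take t s)})"
    by (rule measure_pmf.finite_measure_mono) simp
  also have "\<dots> \<le> (\<Sum>p\<in>?I. measure_pmf.prob M {s. snd (\<Phi> ! p) \<subseteq> set (take t s)})"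
    by (rule measure_pmf.finite_measure_subadditive_finite) auto
  also have "\<dots> = (\<Sum>p<length \<Phi>. if fst (\<Phi> ! p) = None
      then measure_pmf.prob M {s. snd (\<Phi> ! p) \<subseteq> set (take t s)} else 0)"
    by (rule sum.inter_filter) simp
  finally show ?thesis .
qed

text \<open>The left-hand side is the expected number of subsets of U inside the random set X s.\<close>
lemma sum_prob_subset_le:
  assumes "finite U" "\<And>s. finite (X s)" "\<And>s. card (X s) \<le> r"
  shows "(\<Sum>S\<in>Pow U. measure_pmf.prob M {s. S \<subseteq> X s}) \<le> 2 ^ r"
proof -
  have int: "integrable (measure_pmf M) (\<lambda>s. indicator {s. S \<subseteq> X s} s :: real)" for S
    by (rule measure_pmf.integrable_const_bound[where B=1]) auto
  have "(\<Sum>S\<in>Pow U. measure_pmf.prob M {s. S \<subseteq> X s})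
      = measure_pmf.expectation M (\<lambda>s. \<Sum>S\<in>Pow U. indicator {s. S \<subseteq> X s} s)"
    using int by (simp add: Bochner_Integration.integral_sum measure_pmf.emeasure_eq_measure)
  also have "\<dots> \<le> measure_pmf.expectation M (\<lambda>s. 2 ^ r)"
  proof (rule integral_mono)
    fix s
    have "(\<Sum>S\<in>Pow U. indicator {s. S \<subseteq> X s} s :: real) = card (Pow (U \<inter> X s))"
      using assms(1) by (simp add: indicator_def sum.If_cases[of "Pow U"] Int_def Pow_def)
        (intro arg_cong[where f=card], blast)
    also have "\<dots> = 2 ^ card (U \<inter> X s)"
      using assms(1) by (simp add: card_Pow del: Pow_Int_eq)
    also have "\<dots> \<le> 2 ^ r"
      using card_mono[OF assms(2)[of s], of "U \<inter> X s"] assms(3)[of s]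
      by (intro power_increasing) auto
    finally show "(\<Sum>S\<in>Pow U. indicator {s. S \<subseteq> X s} s :: real) \<le> 2 ^ r" .
  qed (use int in auto)
  finally show ?thesis by simp
qed

lemma definite_list_update_neg:
  assumes "p < length \<Phi>" "fst (\<Phi> ! p) = None" "fst C = None"
  shows "definite (set (\<Phi>[p := C])) = definite (set \<Phi>)"
proof -
  have "x \<in> set (\<Phi>[p := C]) \<longleftrightarrow> x \<in> set \<Phi>" if "fst x \<noteq> None" for x
  proof
    assume "x \<in> set (\<Phi>[p := C])"
    then show "x \<in> set \<Phi>" using that assms(3) set_update_subset_insert by fastforce
  next
    assume "x \<in> set \<Phi>"
    then obtain q where q: "q < length \<Phi>" "\<Phi> ! q = x" by (meson in_set_conv_nth)
    then have "q \<noteq> p" using that assms(2) by auto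
    then show "x \<in> set (\<Phi>[p := C])" using q by (metis length_list_update nth_list_update_neq nth_mem)
  qed
  then show ?thesis unfolding definite_def by blast
qed

lemma sum_neg_clauses_le:
  assumes "\<And>S. h S \<ge> (0::real)"
  shows "(\<Sum>C\<in>horn_clauses n. if fst C = None then h (snd C) else 0) \<le> (\<Sum>S\<in>Pow {1..n}. h S)"
proof -
  let ?N = "{C \<in> horn_clauses n. fst C = None}"
  have "(\<Sum>C\<in>horn_clauses n. if fst C = None then h (snd C) else 0) = (\<Sum>C\<in>?N. h (snd C))"
    by (rule sum.inter_filter[symmetric]) (rule finite_horn_clauses)
  also have "\<dots> = (\<Sum>S\<in>snd ` ?N. h S)"
    by (rule sum.reindex[symmetric, unfolded comp_def]) (auto simp: inj_on_def prod_eq_iff)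
  also have "\<dots> \<le> (\<Sum>S\<in>Pow {1..n}. h S)"
    by (rule sum_mono2) (auto simp: assms horn_clauses_def)
  finally show ?thesis .
qed

text \<open>Replacing the clause at position p by the fixed negative clause (None, {1}) leaves the
  definite part unchanged, so the sum splits into a sum over the clause at p, bounded by B, times
  the number of formulas with a given clause at p.\<close>
lemma sum_nth_neg_clause_le:
  fixes h :: "nat set \<Rightarrow> clause set \<Rightarrow> real"
  assumes n: "n \<ge> 1" and p: "p < m" and h: "\<And>S D. h S D \<ge> 0"
    and B: "\<And>D. (\<Sum>S\<in>Pow {1..n}. h S D) \<le> B"
  shows "(\<Sum>\<Phi>\<in>lists_of_len (horn_clauses n) m.
            if fst (\<Phi> ! p) = None then h (snd (\<Phi> ! p)) (definite (set \<Phi>)) else 0)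
     \<le> B * real (card (horn_clauses n)) ^ m / card (horn_clauses n)"
proof -
  let ?H = "horn_clauses n"
  define C0 :: clause where "C0 = (None, {1})"
  have C0: "C0 \<in> ?H" "fst C0 = None" using n by (auto simp: C0_def horn_clauses_def)
  let ?L0 = "{\<Psi> \<in> lists_of_len ?H m. \<Psi> ! p = C0}"
  let ?K = "\<lambda>C \<Psi>. if fst C = None then h (snd C) (definite (set \<Psi>)) else 0"
  have "(\<Sum>\<Phi>\<in>lists_of_len ?H m. ?K (\<Phi> ! p) \<Phi>)
      = (\<Sum>C\<in>?H. \<Sum>\<Phi>\<in>{\<Phi> \<in> lists_of_len ?H m. \<Phi> ! p = C}. ?K (\<Phi> ! p) \<Phi>)"
    by (rule sum_group_nth[OF finite_horn_clauses p])
  also have "\<dots> = (\<Sum>C\<in>?H. \<Sum>\<Phi>\<in>{\<Phi> \<in> lists_of_len ?H m. \<Phi> ! p = C}. ?K C (\<Phi>[p := C0]))"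
    using p C0 definite_list_update_neg
    by (intro sum.cong refl) (auto simp: lists_of_len_def)
  also have "\<dots> = (\<Sum>C\<in>?H. \<Sum>\<Psi>\<in>?L0. ?K C \<Psi>)"
    by (intro sum.cong refl sum_nth_swap[OF p _ C0(1)])
  also have "\<dots> = (\<Sum>\<Psi>\<in>?L0. \<Sum>C\<in>?H. ?K C \<Psi>)"
    by (rule sum.swap)
  also have "\<dots> \<le> (\<Sum>\<Psi>\<in>?L0. B)"
    using sum_neg_clauses_le[OF h] B by (intro sum_mono) (meson order.trans)
  also have "\<dots> = B * real (card ?H) ^ m / card ?H"
    using card_nth_eq[OF finite_horn_clauses p C0(1)] by simp
  finally show ?thesis .
qed

lemma sum_PUR_reject_within_le:
  assumes n: "n \<ge> 1"
  shows "(\<Sum>\<Phi>\<in>lists_of_len (horn_clauses n) m.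
            measure_pmf.prob (PUR (set \<Phi>)) {(b, y). \<not> b \<and> y \<le> t})
     \<le> m * (2 ^ Suc t * real (card (horn_clauses n)) ^ m / card (horn_clauses n))"
proof -
  let ?H = "horn_clauses n"
  define h where "h S D = measure_pmf.prob (prop_seq D) {s. S \<subseteq> set (take (Suc t) s)}" for S D
  let ?G = "\<lambda>p \<Phi>. if fst (\<Phi> ! p) = None then h (snd (\<Phi> ! p)) (definite (set \<Phi>)) else 0"
  have "measure_pmf.prob (PUR (set \<Phi>)) {(b, y). \<not> b \<and> y \<le> t} \<le> (\<Sum>p<m. ?G p \<Phi>)"
    if "\<Phi> \<in> lists_of_len ?H m" for \<Phi>
  proof -
    from that have \<Phi>: "\<forall>C\<in>set \<Phi>. finite (snd C)" "length \<Phi> = m"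
      using finite_snd_horn_clause by (auto simp: lists_of_len_def)
    have "measure_pmf.prob (PUR (set \<Phi>)) {(b, y). \<not> b \<and> y \<le> t}
        \<le> measure_pmf.prob (prop_seq (definite (set \<Phi>))) (refuted_within (set \<Phi>) (Suc t))"
      using PUR_reject_within_le \<Phi>(1) by blast
    also have "\<dots> \<le> (\<Sum>p<m. ?G p \<Phi>)"
      unfolding h_def \<Phi>(2)[symmetric] by (rule prob_refuted_within_le)
    finally show ?thesis .
  qed
  then have "(\<Sum>\<Phi>\<in>lists_of_len ?H m. measure_pmf.prob (PUR (set \<Phi>)) {(b, y). \<not> b \<and> y \<le> t})
      \<le> (\<Sum>p<m. \<Sum>\<Phi>\<in>lists_of_len ?H m. ?G p \<Phi>)"
    by (subst sum.swap) (rule sum_mono)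
  also have "\<dots> \<le> (\<Sum>p<m. 2 ^ Suc t * real (card ?H) ^ m / card ?H)"
  proof (intro sum_mono sum_nth_neg_clause_le[OF n])
    show "(\<Sum>S\<in>Pow {1..n}. h S D) \<le> 2 ^ Suc t" for D
      unfolding h_def by (rule sum_prob_subset_le) (auto intro: order.trans[OF card_length])
  qed (auto simp: h_def)
  finally show ?thesis by simp
qed

lemma prob_unsat_reject_within_le:
  assumes n: "n \<ge> 1"
  shows "measure_pmf.prob (PUR_on_Omega n m) {(\<Phi>, b, y). \<not> satisfiable \<Phi> \<and> y \<le> t}
    \<le> m * 2 ^ Suc t / card (horn_clauses n)"
proof -
  let ?H = "horn_clauses n"
  let ?E = "{(\<Phi>, b, y). \<not> satisfiable \<Phi> \<and> y \<le> t}"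
  have "measure_pmf.prob (PUR (set \<Phi>)) {r. (\<Phi>, r) \<in> ?E}
      \<le> measure_pmf.prob (PUR (set \<Phi>)) {(b, y). \<not> b \<and> y \<le> t}"
    if "\<Phi> \<in> lists_of_len ?H m" for \<Phi>
  proof -
    have "measure_pmf.prob (PUR (set \<Phi>)) {r. (\<Phi>, r) \<in> ?E}
        = measure_pmf.prob (PUR (set \<Phi>)) ({r. (\<Phi>, r) \<in> ?E} \<inter> set_pmf (PUR (set \<Phi>)))"
      by (rule measure_Int_set_pmf[symmetric])
    also have "\<dots> \<le> measure_pmf.prob (PUR (set \<Phi>)) {(b, y). \<not> b \<and> y \<le> t}"
      using that PUR_rejects_unsatisfiable[of \<Phi> n]
      by (intro measure_pmf.finite_measure_mono) (auto simp: lists_of_len_def)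
    finally show ?thesis .
  qed
  then have "measure_pmf.prob (PUR_on_Omega n m) ?E
      \<le> (\<Sum>\<Phi>\<in>lists_of_len ?H m. measure_pmf.prob (PUR (set \<Phi>)) {(b, y). \<not> b \<and> y \<le> t})
        / card (lists_of_len ?H m)"
    unfolding prob_PUR_on_Omega[OF n] by (intro divide_right_mono sum_mono) auto
  also have "\<dots> \<le> m * (2 ^ Suc t * real (card ?H) ^ m / card ?H) / card (lists_of_len ?H m)"
    by (intro divide_right_mono sum_PUR_reject_within_le[OF n]) simp
  also have "\<dots> = m * 2 ^ Suc t / card ?H"
    using card_horn_clauses_pos[OF n]
    by (simp add: card_lists_of_len[OF finite_horn_clauses] field_simps)
  finally show ?thesis by simp
qed

lemma real_nat_floor_bounds:
  fixes x :: real
  assumes "x \<ge> 0"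
  shows "x - 1 \<le> real (nat \<lfloor>x\<rfloor>)" "real (nat \<lfloor>x\<rfloor>) \<le> x"
  using assms by linarith+

lemma two_pow_floor_log_le:
  assumes "n \<ge> 1" "0 \<le> \<lfloor>log 2 (real n)\<rfloor> + k"
  shows "(2::real) ^ nat (\<lfloor>log 2 (real n)\<rfloor> + k) \<le> real n * 2 powr k"
proof -
  have "(2::real) ^ nat (\<lfloor>log 2 (real n)\<rfloor> + k) = 2 powr real_of_int (\<lfloor>log 2 (real n)\<rfloor> + k)"
    using assms(2) by (simp add: powr_realpow[symmetric])
  also have "\<dots> \<le> 2 powr (log 2 (real n) + k)"
    by (intro powr_mono) auto
  also have "\<dots> = real n * 2 powr k"
    using assms(1) by (simp add: powr_add)
  finally show ?thesis .
qed

lemma prob_unsat_few_iterations_le: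
  fixes c :: real
  assumes c: "c > 0" and n: "n \<ge> 1"
  shows "measure_pmf.prob (PUR_on_Omega n (nat \<lfloor>c * 2 ^ n\<rfloor>))
      {(\<Phi>, b, y). \<not> satisfiable \<Phi> \<and> \<not> int y > \<lfloor>log 2 (real n)\<rfloor> + k}
    \<le> 2 * c * 2 powr k"
proof (cases "\<lfloor>log 2 (real n)\<rfloor> + k < 0")
  case True
  then have "int y > \<lfloor>log 2 (real n)\<rfloor> + k" for y
    by linarith
  then have E: "{(\<Phi>, b, y). \<not> satisfiable \<Phi> \<and> \<not> int y > \<lfloor>log 2 (real n)\<rfloor> + k} = {}"
    by auto
  show ?thesis unfolding E using c by simp
next
  case False
  define t where "t = nat (\<lfloor>log 2 (real n)\<rfloor> + k)"
  define m where "m = nat \<lfloor>c * 2 ^ n\<rfloor>"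
  have E: "{(\<Phi>, b, y). \<not> satisfiable \<Phi> \<and> \<not> int y > \<lfloor>log 2 (real n)\<rfloor> + k}
      = {(\<Phi>, b, y). \<not> satisfiable \<Phi> \<and> y \<le> t}"
    using False by (auto simp: t_def)
  have t: "(2::real) ^ t \<le> real n * 2 powr k"
    unfolding t_def using n False by (intro two_pow_floor_log_le) auto
  have m: "real m \<le> c * 2 ^ n"
    unfolding m_def using c by (simp add: real_nat_floor_bounds)
  have "measure_pmf.prob (PUR_on_Omega n m) {(\<Phi>, b, y). \<not> satisfiable \<Phi> \<and> y \<le> t}
      \<le> real m * 2 ^ Suc t / card (horn_clauses n)"
    by (rule prob_unsat_reject_within_le[OF n])
  also have "\<dots> \<le> (c * 2 ^ n) * (2 * (real n * 2 powr k)) / (real n * 2 ^ n)"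
  proof (rule frac_le)
    show "real m * 2 ^ Suc t \<le> (c * 2 ^ n) * (2 * (real n * 2 powr k))"
      using m t by (intro mult_mono) auto
  qed (use c n card_horn_clauses_real_bounds(1)[of n] in auto)
  also have "\<dots> = 2 * c * 2 powr k"
    using n by (simp add: field_simps)
  finally show ?thesis unfolding E m_def .
qed

section \<open>Unsatisfiability has probability bounded away from zero\<close>

definition block_start :: "(nat \<Rightarrow> nat) \<Rightarrow> nat \<Rightarrow> nat" where
  "block_start bl j = (\<Sum>i<j. bl i)"

definition block :: "(nat \<Rightarrow> nat) \<Rightarrow> nat \<Rightarrow> 'a list \<Rightarrow> 'a list" where
  "block bl j xs = take (bl j) (drop (block_start bl j) xs)"

definition newly_forced :: "nat set \<Rightarrow> clause list \<Rightarrow> nat set" where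
  "newly_forced A B = {v. \<exists>S. (Some v, S) \<in> set B \<and> S \<subseteq> A \<and> v \<notin> A}"

text \<open>Each block adds at most one variable, so that the chance of block j adding one depends
  only on j once the earlier blocks have all succeeded.\<close>
primrec forced :: "(nat \<Rightarrow> nat) \<Rightarrow> nat \<Rightarrow> clause list \<Rightarrow> nat set" where
  "forced bl 0 xs = {}"
| "forced bl (Suc j) xs =
     (if newly_forced (forced bl j xs) (block bl j xs) = {} then forced bl j xs
      else insert (SOME v. v \<in> newly_forced (forced bl j xs) (block bl j xs)) (forced bl j xs))"

definition forcing_clauses :: "nat \<Rightarrow> nat set \<Rightarrow> clause set" where
  "forcing_clauses n A = Some ` ({1..n} - A) \<times> Pow A"

definition refuting_clauses :: "nat set \<Rightarrow> clause set" where
  "refuting_clauses A = {None} \<times> (Pow A - {{}})"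

lemma block_start_Suc: "block_start bl (Suc j) = block_start bl j + bl j"
  by (simp add: block_start_def)

lemma block_take: "block_start bl (Suc j) \<le> a \<Longrightarrow> block bl j (take a zs) = block bl j zs"
  unfolding block_def block_start_Suc by (simp add: take_drop min_def)

lemma forced_take: "block_start bl j \<le> a \<Longrightarrow> forced bl j (take a zs) = forced bl j zs"
proof (induction j)
  case (Suc j)
  then have "block_start bl j \<le> a" by (simp add: block_start_Suc)
  with Suc show ?case by (simp add: block_take)
qed simp

lemma set_block_subset: "set (block bl j xs) \<subseteq> set xs"
  unfolding block_def by (meson order.trans set_drop_subset set_take_subset)

lemma some_newly_forced:
  assumes "newly_forced A (block bl j xs) \<noteq> {}"
  obtains S where "(Some (SOME v. v \<in> newly_forced A (block bl j xs)), S) \<in> set xs" "S \<subseteq> A"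
    "(SOME v. v \<in> newly_forced A (block bl j xs)) \<notin> A"
proof -
  let ?w = "SOME v. v \<in> newly_forced A (block bl j xs)"
  have "?w \<in> newly_forced A (block bl j xs)"
    using assms by (meson all_not_in_conv someI)
  then obtain S where "(Some ?w, S) \<in> set (block bl j xs)" "S \<subseteq> A" "?w \<notin> A"
    unfolding newly_forced_def by blast
  with set_block_subset[of bl j xs] show ?thesis by (intro that) auto
qed

lemma finite_forced: "finite (forced bl j xs)"
  by (induction j) auto

lemma forced_subset: "set xs \<subseteq> horn_clauses n \<Longrightarrow> forced bl j xs \<subseteq> {1..n}"
proof (induction j)
  case (Suc j)
  show ?case
  proof (cases "newly_forced (forced bl j xs) (block bl j xs) = {}")
    case False
    then obtain S where "(Some (SOME v. v \<in> newly_forced (forced bl j xs) (block bl j xs)), S) \<in> set xs"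
      by (rule some_newly_forced)
    then show ?thesis using Suc False by (auto simp: horn_clauses_def)
  qed (use Suc in simp)
qed simp

lemma forced_true:
  assumes "\<forall>C\<in>set xs. clause_sat a C" "v \<in> forced bl j xs"
  shows "a v"
  using assms(2)
proof (induction j arbitrary: v)
  case (Suc j)
  show ?case
  proof (cases "newly_forced (forced bl j xs) (block bl j xs) = {}")
    case False
    let ?w = "SOME v. v \<in> newly_forced (forced bl j xs) (block bl j xs)"
    obtain S where S: "(Some ?w, S) \<in> set xs" "S \<subseteq> forced bl j xs"
      using False by (rule some_newly_forced)
    then have "clause_sat a (Some ?w, S)" "\<forall>u\<in>S. a u"
      using assms(1) Suc.IH by blast+
    then have "a ?w" by (auto simp: clause_sat_def)
    then show ?thesis using Suc False by auto
  qed (use Suc in simp)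
qed simp

lemma card_forced_Suc:
  assumes "card (forced bl j xs) = j"
    and "set (block bl j xs) \<inter> forcing_clauses n (forced bl j xs) \<noteq> {}"
  shows "card (forced bl (Suc j) xs) = Suc j"
proof -
  have ne: "newly_forced (forced bl j xs) (block bl j xs) \<noteq> {}"
    using assms(2) unfolding forcing_clauses_def newly_forced_def by blast
  then obtain S where
    "(SOME v. v \<in> newly_forced (forced bl j xs) (block bl j xs)) \<notin> forced bl j xs"
    by (rule some_newly_forced)
  then show ?thesis using ne assms(1) finite_forced[of bl j xs] by simp
qed

lemma forcing_clauses_subset: "A \<subseteq> {1..n} \<Longrightarrow> forcing_clauses n A \<subseteq> horn_clauses n"
  unfolding forcing_clauses_def horn_clauses_def by auto

lemma card_forcing_clauses:
  assumes "A \<subseteq> {1..n}"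
  shows "card (forcing_clauses n A) = (n - card A) * 2 ^ card A"
proof -
  have "finite A" using assms finite_subset by blast
  moreover have "card (Some ` ({1..n} - A)) = n - card A"
    using assms \<open>finite A\<close> by (simp add: card_image card_Diff_subset)
  ultimately show ?thesis
    unfolding forcing_clauses_def by (simp add: card_cartesian_product card_Pow)
qed

lemma forcing_count_le: "(n - j) * 2 ^ j \<le> card (horn_clauses n)"
proof (cases "j \<le> n")
  case True
  have "(n - j) * 2 ^ j \<le> n * 2 ^ n" by (intro mult_mono power_increasing True) auto
  then show ?thesis using card_horn_clauses_bounds(1)[of n] by linarith
qed simp

lemma refuting_clauses_subset: "A \<subseteq> {1..n} \<Longrightarrow> refuting_clauses A \<subseteq> horn_clauses n"
  unfolding refuting_clauses_def horn_clauses_def by auto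

lemma card_refuting_clauses: "finite A \<Longrightarrow> card (refuting_clauses A) = 2 ^ card A - 1"
  unfolding refuting_clauses_def by (simp add: card_cartesian_product card_Pow card_Diff_singleton)

lemma refuting_count_le: "R \<le> n \<Longrightarrow> 2 ^ R - 1 \<le> card (horn_clauses n)"
proof -
  assume "R \<le> n"
  then have "(2::nat) ^ R \<le> 2 ^ n" by (rule power_increasing) auto
  also have "\<dots> \<le> n * 2 ^ n + 1" by (cases n) auto
  finally show ?thesis using card_horn_clauses_bounds(1)[of n] by linarith
qed

lemma card_forced_Suc_ge:
  assumes n: "n \<ge> 1" and m: "block_start bl (Suc j) \<le> m"
  shows "(1 - (1 - real ((n - j) * 2 ^ j) / card (horn_clauses n)) ^ bl j)
        * card {zs \<in> lists_of_len (horn_clauses n) m. card (forced bl j zs) = j}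
    \<le> card {zs \<in> lists_of_len (horn_clauses n) m. card (forced bl (Suc j) zs) = Suc j}"
proof -
  let ?H = "horn_clauses n" and ?a = "block_start bl j"
  have T: "forcing_clauses n (forced bl j xs) \<subseteq> ?H
      \<and> (n - j) * 2 ^ j \<le> card (forcing_clauses n (forced bl j xs))"
    if "xs \<in> lists_of_len ?H ?a" "card (forced bl j xs) = j" for xs
  proof -
    have "forced bl j xs \<subseteq> {1..n}" using that forced_subset by (auto simp: lists_of_len_def)
    then show ?thesis using forcing_clauses_subset card_forcing_clauses that(2) by auto
  qed
  have "(1 - (1 - real ((n - j) * 2 ^ j) / card ?H) ^ bl j)
        * card {zs \<in> lists_of_len ?H m. card (forced bl j (take ?a zs)) = j}
      \<le> card {zs \<in> lists_of_len ?H m. card (forced bl j (take ?a zs)) = j \<and>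
            set (take (bl j) (drop ?a zs)) \<inter> forcing_clauses n (forced bl j (take ?a zs)) \<noteq> {}}"
    using m T by (intro card_block_meets_ge finite_horn_clauses card_horn_clauses_pos n)
       (auto simp: block_start_Suc)
  also have "\<dots> \<le> card {zs \<in> lists_of_len ?H m. card (forced bl (Suc j) zs) = Suc j}"
    using card_forced_Suc[of bl j _ n]
    by (intro of_nat_mono card_mono)
       (auto simp: finite_lists_of_len finite_horn_clauses block_def forced_take simp del: forced.simps)
  finally show ?thesis by (simp add: forced_take)
qed

lemma card_forced_ge_prod:
  assumes n: "n \<ge> 1" and m: "block_start bl R \<le> m"
  shows "(\<Prod>j<R. 1 - (1 - real ((n - j) * 2 ^ j) / card (horn_clauses n)) ^ bl j)
        * card (lists_of_len (horn_clauses n) m)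
    \<le> card {zs \<in> lists_of_len (horn_clauses n) m. card (forced bl R zs) = R}"
  using m
proof (induction R)
  case (Suc R)
  let ?H = "horn_clauses n"
  let ?p = "1 - (1 - real ((n - R) * 2 ^ R) / card ?H) ^ bl R"
  have "block_start bl R \<le> m" using Suc.prems by (simp add: block_start_Suc)
  note IH = Suc.IH[OF this]
  have "real ((n - R) * 2 ^ R) \<le> card ?H" using forcing_count_le[of n R] by linarith
  then have "0 \<le> ?p"
    using card_horn_clauses_pos[OF n] by (simp add: power_le_one)
  have "(\<Prod>j<Suc R. 1 - (1 - real ((n - j) * 2 ^ j) / card ?H) ^ bl j)
        * card (lists_of_len ?H m)
      = ?p * ((\<Prod>j<R. 1 - (1 - real ((n - j) * 2 ^ j) / card ?H) ^ bl j)
        * card (lists_of_len ?H m))"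
    by (simp add: algebra_simps)
  also have "\<dots> \<le> ?p * card {zs \<in> lists_of_len ?H m. card (forced bl R zs) = R}"
    using IH \<open>0 \<le> ?p\<close> by (rule mult_left_mono)
  also have "\<dots> \<le> card {zs \<in> lists_of_len ?H m. card (forced bl (Suc R) zs) = Suc R}"
    by (rule card_forced_Suc_ge[OF n Suc.prems])
  finally show ?case .
qed simp

lemma card_unsat_ge_forced:
  assumes n: "n \<ge> 1" and m: "block_start bl R + b \<le> m" and R: "R \<le> n"
  shows "(1 - (1 - real (2 ^ R - 1) / card (horn_clauses n)) ^ b)
        * card {zs \<in> lists_of_len (horn_clauses n) m. card (forced bl R zs) = R}
    \<le> card {zs \<in> lists_of_len (horn_clauses n) m. \<not> satisfiable zs}"
proof -
  let ?H = "horn_clauses n" and ?a = "block_start bl R"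
  have T: "refuting_clauses (forced bl R xs) \<subseteq> ?H
      \<and> 2 ^ R - 1 \<le> card (refuting_clauses (forced bl R xs))"
    if "xs \<in> lists_of_len ?H ?a" "card (forced bl R xs) = R" for xs
  proof -
    have "forced bl R xs \<subseteq> {1..n}" using that forced_subset by (auto simp: lists_of_len_def)
    then show ?thesis
      using refuting_clauses_subset card_refuting_clauses that(2) finite_forced by auto
  qed
  have unsat: "\<not> satisfiable zs"
    if "set (take b (drop ?a zs)) \<inter> refuting_clauses (forced bl R zs) \<noteq> {}" for zs
  proof
    assume "satisfiable zs"
    then obtain a where a: "\<forall>C\<in>set zs. clause_sat a C" unfolding satisfiable_def by blast
    from that obtain S where "(None, S) \<in> set zs" "S \<subseteq> forced bl R zs" "S \<noteq> {}"
      unfolding refuting_clauses_def by (auto dest: in_set_takeD in_set_dropD)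
    with a forced_true[OF a] show False by (force simp: clause_sat_def)
  qed
  have "(1 - (1 - real (2 ^ R - 1) / card ?H) ^ b)
        * card {zs \<in> lists_of_len ?H m. card (forced bl R (take ?a zs)) = R}
      \<le> card {zs \<in> lists_of_len ?H m. card (forced bl R (take ?a zs)) = R \<and>
            set (take b (drop ?a zs)) \<inter> refuting_clauses (forced bl R (take ?a zs)) \<noteq> {}}"
    using m T by (intro card_block_meets_ge finite_horn_clauses card_horn_clauses_pos n) auto
  also have "\<dots> \<le> card {zs \<in> lists_of_len ?H m. \<not> satisfiable zs}"
    using unsat forced_take[of bl R ?a]
    by (intro of_nat_mono card_mono) (auto simp: finite_lists_of_len finite_horn_clauses)
  finally show ?thesis by (simp add: forced_take)
qed

lemma sum_inverse_squares_le: "(\<Sum>j<R. 1 / (real j + 1)^2) \<le> 2 - 2 / (real R + 1)"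
proof (induction R)
  case (Suc R)
  define t where "t = real R + 1"
  have t: "t \<ge> 1" by (simp add: t_def)
  have "t \<le> t * t" using mult_right_mono[OF t, of t] t by simp
  have "1 / t^2 = 2 / (2 * t^2)" by simp
  also have "\<dots> \<le> 2 / (t * (t + 1))"
    using t \<open>t \<le> t * t\<close> mult_pos_pos[of t "t + 1"]
    by (intro frac_le) (auto simp: power2_eq_square algebra_simps)
  also have "\<dots> = 2 / t - 2 / (t + 1)" using t by (simp add: field_simps)
  finally have "1 / t^2 \<le> 2 / t - 2 / (t + 1)" .
  moreover have "2 / (real (Suc R) + 1) = 2 / (t + 1)" by (simp add: t_def)
  ultimately show ?case using Suc.IH by (simp add: t_def)
qed simp

lemma of_nat_div_ge: "d > 0 \<Longrightarrow> real m / real d - 1 \<le> real (m div d)"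
proof -
  assume d: "d > 0"
  have "m = d * (m div d) + m mod d" by simp
  then have "real m = real d * real (m div d) + real (m mod d)" by (metis of_nat_add of_nat_mult)
  moreover have "real (m mod d) < real d" using d by simp
  ultimately have "real m < real d * (real (m div d) + 1)" by (simp add: algebra_simps)
  then show ?thesis using d by (simp add: field_simps)
qed

lemma block_start_le_half: "real (block_start (\<lambda>j. m div (4 * (j + 1)^2)) R) \<le> real m / 2"
proof -
  have "real (block_start (\<lambda>j. m div (4 * (j + 1)^2)) R)
      \<le> (\<Sum>j<R. real m / 4 * (1 / (real j + 1)^2))"
    unfolding block_start_def of_nat_sum
    by (intro sum_mono order.trans[OF of_nat_div_le_of_nat]) (simp add: add.commute)
  also have "\<dots> = real m / 4 * (\<Sum>j<R. 1 / (real j + 1)^2)"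
    by (simp add: sum_distrib_left)
  also have "\<dots> \<le> real m / 4 * 2"
  proof (rule mult_left_mono)
    show "(\<Sum>j<R. 1 / (real j + 1)^2) \<le> 2"
      using sum_inverse_squares_le[of R] by (smt (verit) divide_nonneg_nonneg of_nat_0_le_iff)
  qed simp
  finally show ?thesis by simp
qed

lemma one_minus_pow_le_exp:
  fixes x :: real
  assumes "0 \<le> x" "x \<le> 1"
  shows "(1 - x) ^ b \<le> exp (- (x * b))"
proof -
  have "(1 - x) ^ b \<le> exp (- x) ^ b"
    using exp_ge_add_one_self[of "-x"] assms by (intro power_mono) auto
  also have "\<dots> = exp (- (x * b))" by (simp add: exp_of_nat_mult[symmetric] algebra_simps)
  finally show ?thesis .
qed

lemma one_minus_exp_le_one_minus_pow:
  fixes y :: real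
  assumes "0 \<le> y" "y \<le> 1" "L \<le> y * b"
  shows "1 - exp (- L) \<le> 1 - (1 - y) ^ b"
proof -
  have "(1 - y) ^ b \<le> exp (- (y * b))" by (rule one_minus_pow_le_exp[OF assms(1,2)])
  also have "\<dots> \<le> exp (- L)" using assms(3) by simp
  finally show ?thesis by simp
qed

lemma prod_one_minus_bounded_below:
  fixes x :: "nat \<Rightarrow> real"
  assumes x: "\<And>j. 0 \<le> x j \<and> x j < 1"
    and small: "eventually (\<lambda>j. x j \<le> (1/2) ^ (j + 2)) at_top"
  obtains \<delta> where "\<delta> > 0" "\<And>R. \<delta> \<le> (\<Prod>j<R. 1 - x j)"
proof -
  obtain J where J: "\<And>j. j \<ge> J \<Longrightarrow> x j \<le> (1/2) ^ (j + 2)"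
    using small unfolding eventually_at_top_linorder by blast
  define P where "P = (\<Prod>j<J. 1 - x j)"
  have factor: "0 < 1 - x j" "1 - x j \<le> 1" for j using x[of j] by auto
  have "P > 0" unfolding P_def by (rule prod_pos) (use factor in auto)
  have split: "(\<Prod>j<R'. 1 - x j) = (\<Prod>j<R. 1 - x j) * (\<Prod>j\<in>{R..<R'}. 1 - x j)"
    if "R \<le> R'" for R R'
    using prod.union_disjoint[of "{..<R}" "{R..<R'}" "\<lambda>j. 1 - x j"] that
    by (simp add: ivl_disj_int_one ivl_disj_un_one)
  have tail: "1/2 \<le> (\<Prod>j\<in>{J..<R}. 1 - x j)" for R
  proof -
    have "(\<Sum>j\<in>{J..<R}. x j) \<le> (\<Sum>j\<in>{J..<R}. (1/2) ^ (j + 2))"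
      by (rule sum_mono) (use J in simp)
    also have "\<dots> \<le> (\<Sum>j<R. (1/2) ^ (j + 2))"
      by (rule sum_mono2) auto
    also have "\<dots> = 1/4 * (\<Sum>j<R. (1/2::real) ^ j)"
      by (simp add: sum_distrib_left power_add)
    also have "\<dots> \<le> 1/2"
      by (simp add: sum_gp_strict)
    finally have "1 - 1/2 \<le> 1 - (\<Sum>j\<in>{J..<R}. x j)" by simp
    also have "\<dots> \<le> (\<Prod>j\<in>{J..<R}. 1 - x j)"
      by (rule Weierstrass_prod_ineq) (use x in \<open>auto simp: less_imp_le\<close>)
    finally show ?thesis by simp
  qed
  show ?thesis
  proof
    show "P / 2 > 0" using \<open>P > 0\<close> by simp
    fix R
    have "P / 2 \<le> (\<Prod>j<max R J. 1 - x j)"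
      using split[of J "max R J"] tail[of "max R J"] \<open>P > 0\<close> unfolding P_def by simp
    also have "\<dots> \<le> (\<Prod>j<R. 1 - x j)"
      using split[of R "max R J"] factor
      by (simp add: mult_left_le prod_le_1 prod_nonneg less_imp_le)
    finally show "P / 2 \<le> (\<Prod>j<R. 1 - x j)" .
  qed
qed

lemma square_le_pow2: "(R + 1)^2 \<le> 4 * (2::nat) ^ R"
proof (induction R)
  case (Suc R)
  show ?case
  proof (cases "R \<ge> 2")
    case True
    then have "2 * 2 \<le> R * R" by (intro mult_mono) auto
    then have "(Suc R + 1)^2 \<le> 2 * (R + 1)^2"
      by (simp add: power2_eq_square algebra_simps)
    then show ?thesis using Suc by simp
  next
    case False
    then have "R = 0 \<or> R = 1" by auto
    then show ?thesis by (auto simp: power2_eq_square)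
  qed
qed simp

lemma floor_log_bounds:
  assumes n: "n \<ge> 32" and R: "R = Suc (floor_log n)"
  shows "n < 2 ^ R" "2 ^ R \<le> 2 * n" "(R + 1)^2 \<le> 8 * n" "2 * (R + 1) \<le> n"
proof -
  show "n < 2 ^ R" using floor_log_exp2_gt[of n] R by simp
  show "2 ^ R \<le> 2 * n" using floor_log_exp2_le[of n] n R by simp
  then show sq: "(R + 1)^2 \<le> 8 * n" using square_le_pow2[of R] by linarith
  show "2 * (R + 1) \<le> n"
  proof (rule ccontr)
    assume "\<not> 2 * (R + 1) \<le> n"
    then have "n * n < (2 * (R + 1)) * (2 * (R + 1))" by (intro mult_strict_mono) auto
    also have "\<dots> \<le> 32 * n" using sq by (simp add: power2_eq_square)
    finally show False using n by simp
  qed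
qed

lemma forcing_density_ge:
  assumes "2 * (j + 1) \<le> n"
  shows "2 ^ j / (2 * 2 ^ n) \<le> real ((n - j) * 2 ^ j) / card (horn_clauses n)"
proof -
  have N: "0 < real (card (horn_clauses n))" "real (card (horn_clauses n)) \<le> (real n + 1) * 2 ^ n"
    using card_horn_clauses_pos[of n] card_horn_clauses_real_bounds(2)[of n] assms by auto
  have "real n + 1 \<noteq> 0" by linarith
  then have "2 ^ j / (2 * 2 ^ n) = ((real n + 1) * (2 ^ j / 2)) / ((real n + 1) * 2 ^ n)"
    by (subst mult_divide_mult_cancel_left) simp_all
  also have "\<dots> = ((real n + 1) / 2 * 2 ^ j) / ((real n + 1) * 2 ^ n)"
    by simp
  also have "\<dots> \<le> real (n - j) * 2 ^ j / card (horn_clauses n)"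
    using assms N by (intro frac_le mult_right_mono) (auto simp: of_nat_diff)
  finally show ?thesis by simp
qed

lemma refuting_density_ge:
  assumes "n \<ge> 1" "n \<le> 2 ^ R - 1"
  shows "1 / (2 * 2 ^ n) \<le> real (2 ^ R - 1) / card (horn_clauses n)"
proof -
  have N: "0 < real (card (horn_clauses n))" "real (card (horn_clauses n)) \<le> (real n + 1) * 2 ^ n"
    using card_horn_clauses_pos[of n] card_horn_clauses_real_bounds(2)[of n] assms by auto
  have "1 / 2 \<le> real n / (real n + 1)" using assms(1) by (simp add: field_simps)
  then have "1 / (2 * 2 ^ n) \<le> real n / ((real n + 1) * 2 ^ n)"
    using divide_right_mono[of "1 / 2" "real n / (real n + 1)" "2 ^ n"]
    unfolding divide_divide_eq_left by simp
  also have "\<dots> \<le> real (2 ^ R - 1) / card (horn_clauses n)"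
  proof (rule frac_le)
    show "real n \<le> real (2 ^ R - 1)" using assms(2) by (simp only: of_nat_le_iff)
  qed (use N in auto)
  finally show ?thesis .
qed

lemma block_factor_ge:
  fixes c :: real
  assumes c: "c > 0" and n: "n \<ge> 32" and big: "1 + 32 * real n < c * 2 ^ n / 2"
    and j: "j < Suc (floor_log n)"
  shows "1 - exp (- (c * 2 ^ j / (16 * (real j + 1)^2)))
    \<le> 1 - (1 - real ((n - j) * 2 ^ j) / card (horn_clauses n))
           ^ (nat \<lfloor>c * 2 ^ n\<rfloor> div (4 * (j + 1)^2))"
proof -
  define R where "R = Suc (floor_log n)"
  define D where "D = (real j + 1)^2"
  define y where "y = real ((n - j) * 2 ^ j) / card (horn_clauses n)"
  note Rb = floor_log_bounds[OF n R_def]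
  have "(j + 1)^2 \<le> (R + 1)^2" using j by (intro power_mono) (auto simp: R_def)
  then have "real ((j + 1)^2) \<le> real (8 * n)" using Rb(3) by linarith
  then have D: "0 < D" "D \<le> 8 * real n" by (auto simp: D_def add.commute)
  have y: "0 \<le> y" "y \<le> 1" "2 ^ j / (2 * 2 ^ n) \<le> y"
    using forcing_count_le[of n j] card_horn_clauses_pos[of n] n
      forcing_density_ge[of j n] Rb(4) j
    by (auto simp: y_def R_def divide_le_eq_1 simp del: of_nat_mult of_nat_power)
  have "c * 2 ^ n / (8 * D) \<le> (c * 2 ^ n - 1) / (4 * D) - 1"
    using D big by (simp add: field_simps)
  also have "\<dots> \<le> real (nat \<lfloor>c * 2 ^ n\<rfloor>) / (4 * D) - 1"
    using D real_nat_floor_bounds(1)[of "c * 2 ^ n"] c by (simp add: divide_right_mono)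
  also have "\<dots> \<le> real (nat \<lfloor>c * 2 ^ n\<rfloor> div (4 * (j + 1)^2))"
    using of_nat_div_ge[of "4 * (j + 1)^2" "nat \<lfloor>c * 2 ^ n\<rfloor>"] by (simp add: D_def add.commute)
  finally have bl: "c * 2 ^ n / (8 * D) \<le> real (nat \<lfloor>c * 2 ^ n\<rfloor> div (4 * (j + 1)^2))" .
  have "c * 2 ^ j / (16 * (real j + 1)^2) = 2 ^ j / (2 * 2 ^ n) * (c * 2 ^ n / (8 * D))"
    by (simp add: D_def field_simps)
  also have "\<dots> \<le> y * real (nat \<lfloor>c * 2 ^ n\<rfloor> div (4 * (j + 1)^2))"
    using y bl c D by (intro mult_mono) auto
  finally show ?thesis
    unfolding y_def by (rule one_minus_exp_le_one_minus_pow[OF y(1,2)[unfolded y_def]])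
qed

lemma last_factor_ge:
  fixes c :: real
  assumes c: "c > 0" and n: "n \<ge> 32" and big: "1 + 32 * real n < c * 2 ^ n / 2"
  shows "1 - exp (- (c / 8))
    \<le> 1 - (1 - real (2 ^ Suc (floor_log n) - 1) / card (horn_clauses n)) ^ (nat \<lfloor>c * 2 ^ n\<rfloor> div 2)"
proof -
  define R where "R = Suc (floor_log n)"
  define y where "y = real (2 ^ R - 1) / card (horn_clauses n)"
  note Rb = floor_log_bounds[OF n R_def]
  have "R \<le> n" using Rb(4) by simp
  then have "real (2 ^ R - 1) \<le> card (horn_clauses n)"
    using refuting_count_le by (simp only: of_nat_le_iff)
  then have y: "0 \<le> y" "y \<le> 1"
    using card_horn_clauses_pos[of n] n by (auto simp: y_def divide_le_eq_1)
  have "1 / (2 * 2 ^ n) \<le> y"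
    unfolding y_def using n Rb(1) by (intro refuting_density_ge) auto
  have "real n \<ge> 32" "c * 2 ^ n - 1 \<le> real (nat \<lfloor>c * 2 ^ n\<rfloor>)"
    using n c by (simp_all add: real_nat_floor_bounds)
  then have "c * 2 ^ n / 4 \<le> real (nat \<lfloor>c * 2 ^ n\<rfloor>) / 2 - 1"
    using big by linarith
  also have "\<dots> \<le> real (nat \<lfloor>c * 2 ^ n\<rfloor> div 2)"
    using of_nat_div_ge[of 2 "nat \<lfloor>c * 2 ^ n\<rfloor>"] by simp
  finally have b: "c * 2 ^ n / 4 \<le> real (nat \<lfloor>c * 2 ^ n\<rfloor> div 2)" .
  have "c / 8 = 1 / (2 * 2 ^ n) * (c * 2 ^ n / 4)" by (simp add: field_simps)
  also have "\<dots> \<le> y * real (nat \<lfloor>c * 2 ^ n\<rfloor> div 2)"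
    using y \<open>1 / (2 * 2 ^ n) \<le> y\<close> b c by (intro mult_mono) auto
  finally show ?thesis
    unfolding y_def R_def by (rule one_minus_exp_le_one_minus_pow[OF y(1,2)[unfolded y_def R_def]])
qed

lemma card_unsat_ge:
  fixes c :: real
  assumes c: "c > 0" and n: "n \<ge> 32" and big: "1 + 32 * real n < c * 2 ^ n / 2"
    and \<delta>: "\<And>R. \<delta> \<le> (\<Prod>j<R. 1 - exp (- (c * 2 ^ j / (16 * (real j + 1)^2))))"
  shows "(1 - exp (- (c / 8))) * \<delta> * card (lists_of_len (horn_clauses n) (nat \<lfloor>c * 2 ^ n\<rfloor>))
    \<le> card {zs \<in> lists_of_len (horn_clauses n) (nat \<lfloor>c * 2 ^ n\<rfloor>). \<not> satisfiable zs}"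
proof -
  define m where "m = nat \<lfloor>c * 2 ^ n\<rfloor>"
  define bl where "bl j = m div (4 * (j + 1)^2)" for j
  define R where "R = Suc (floor_log n)"
  define N where "N = card (horn_clauses n)"
  have n1: "n \<ge> 1" using n by simp
  have blocks: "block_start bl R + m div 2 \<le> m"
    using block_start_le_half[of m R] of_nat_div_le_of_nat[of m 2] unfolding bl_def
    by linarith
  have e: "0 \<le> 1 - exp (- (c / 8))" using c by simp
  have "\<delta> \<le> (\<Prod>j<R. 1 - (1 - real ((n - j) * 2 ^ j) / N) ^ bl j)"
    using \<delta>[of R] block_factor_ge[OF c n big] c
    by (elim order.trans, intro prod_mono) (auto simp: R_def N_def bl_def m_def)
  then have "(1 - exp (- (c / 8))) * \<delta> * card (lists_of_len (horn_clauses n) m)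
      \<le> (1 - exp (- (c / 8))) * ((\<Prod>j<R. 1 - (1 - real ((n - j) * 2 ^ j) / N) ^ bl j)
        * card (lists_of_len (horn_clauses n) m))"
    using e by (simp add: mult.assoc mult_left_mono mult_right_mono)
  also have "\<dots> \<le> (1 - exp (- (c / 8)))
      * card {zs \<in> lists_of_len (horn_clauses n) m. card (forced bl R zs) = R}"
    using card_forced_ge_prod[OF n1 order.trans[OF le_add1 blocks]] e
    unfolding N_def by (rule mult_left_mono)
  also have "\<dots> \<le> (1 - (1 - real (2 ^ R - 1) / N) ^ (m div 2))
      * card {zs \<in> lists_of_len (horn_clauses n) m. card (forced bl R zs) = R}"
    using last_factor_ge[OF c n big] by (intro mult_right_mono) (auto simp: R_def N_def m_def)
  also have "\<dots> \<le> card {zs \<in> lists_of_len (horn_clauses n) m. \<not> satisfiable zs}"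
    using card_unsat_ge_forced[OF n1 blocks] floor_log_bounds(4)[OF n R_def] unfolding N_def
    by simp
  finally show ?thesis unfolding m_def .
qed

lemma eventually_block_failure_small:
  fixes c :: real
  assumes c: "c > 0"
  shows "eventually (\<lambda>j. exp (- (c * 2 ^ j / (16 * (real j + 1)^2))) \<le> (1/2) ^ (j + 2)) at_top"
proof -
  have "((\<lambda>j::nat. (real j + 2) * (real j + 1)^2 / 2 ^ j) \<longlongrightarrow> 0) at_top" by real_asymp
  moreover have "c / (16 * ln 2) > 0" using c by simp
  ultimately have "eventually (\<lambda>j. (real j + 2) * (real j + 1)^2 / 2 ^ j < c / (16 * ln 2)) at_top"
    by (rule order_tendstoD(2))
  then show ?thesis
  proof (rule eventually_mono)
    fix j :: nat assume "(real j + 2) * (real j + 1)^2 / 2 ^ j < c / (16 * ln 2)"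
    then have "(real j + 2) * ln 2 \<le> c * 2 ^ j / (16 * (real j + 1)^2)"
      by (simp add: field_simps)
    then have "exp (- (c * 2 ^ j / (16 * (real j + 1)^2))) \<le> exp (- ((real j + 2) * ln 2))"
      by simp
    also have "\<dots> = exp (real (j + 2) * - ln 2)"
      by simp
    also have "\<dots> = exp (- ln 2) ^ (j + 2)"
      by (rule exp_of_nat_mult)
    also have "\<dots> = (1/2) ^ (j + 2)"
      by (simp add: exp_minus)
    finally show "exp (- (c * 2 ^ j / (16 * (real j + 1)^2))) \<le> (1/2) ^ (j + 2)" .
  qed
qed

lemma prob_unsat_bounded_below:
  fixes c :: real
  assumes c: "c > 0"
  obtains \<delta> where "\<delta> > 0"
    "eventually (\<lambda>n. \<delta> \<le> measure_pmf.prob (PUR_on_Omega n (nat \<lfloor>c * 2 ^ n\<rfloor>))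
        {(\<Phi>, r). \<not> satisfiable \<Phi>}) sequentially"
proof -
  define x where "x j = exp (- (c * 2 ^ j / (16 * (real j + 1)^2)))" for j :: nat
  have "0 \<le> x j \<and> x j < 1" for j
    using c by (simp add: x_def)
  then obtain \<delta> where \<delta>: "\<delta> > 0" "\<And>R. \<delta> \<le> (\<Prod>j<R. 1 - x j)"
    using prod_one_minus_bounded_below eventually_block_failure_small[OF c, folded x_def] by blast
  have "((\<lambda>n::nat. (1 + 32 * real n) / 2 ^ n) \<longlongrightarrow> 0) at_top" by real_asymp
  then have "eventually (\<lambda>n. (1 + 32 * real n) / 2 ^ n < c / 2) sequentially"
    using c by (intro order_tendstoD(2)) auto
  then have big: "eventually (\<lambda>n. 1 + 32 * real n < c * 2 ^ n / 2) sequentially"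
    by eventually_elim (simp add: field_simps)
  show ?thesis
  proof
    show "(1 - exp (- (c / 8))) * \<delta> > 0" using c \<delta> by simp
    show "eventually (\<lambda>n. (1 - exp (- (c / 8))) * \<delta> \<le> measure_pmf.prob
        (PUR_on_Omega n (nat \<lfloor>c * 2 ^ n\<rfloor>)) {(\<Phi>, r). \<not> satisfiable \<Phi>}) sequentially"
      using big eventually_ge_at_top[of 32]
    proof eventually_elim
      case (elim n)
      let ?L = "lists_of_len (horn_clauses n) (nat \<lfloor>c * 2 ^ n\<rfloor>)"
      have "card ?L > 0"
        using card_horn_clauses_pos[of n] elim
        by (auto simp: card_gt_0_iff finite_lists_of_len finite_horn_clauses lists_of_len_nonempty)
      then show ?case
        using card_unsat_ge[OF c elim(2) elim(1) \<delta>(2)[unfolded x_def]] elim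
        by (simp add: prob_PUR_on_Omega_unsat field_simps)
    qed
  qed
qed

section \<open>The conditional probability\<close>

lemma cond_prob_iter_le_1: "cond_prob_iter c n k \<le> 1"
proof -
  define D where "D = PUR_on_Omega n (nat \<lfloor>c * 2 ^ n\<rfloor>)"
  have "measure_pmf.prob D {(\<Phi>, b, y). \<not> satisfiable \<Phi> \<and> int y > \<lfloor>log 2 (real n)\<rfloor> + k}
      \<le> measure_pmf.prob D {(\<Phi>, r). \<not> satisfiable \<Phi>}"
    by (rule measure_pmf.finite_measure_mono) auto
  then show ?thesis
    unfolding cond_prob_iter_def Let_def D_def[symmetric]
    by (cases "measure_pmf.prob D {(\<Phi>, r). \<not> satisfiable \<Phi>} = 0")
       (simp_all add: divide_le_eq_1 order_less_le)
qed

lemma cond_prob_iter_ge: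
  fixes c \<delta> :: real
  assumes c: "c > 0" and n: "n \<ge> 1" and \<delta>: "\<delta> > 0"
    and unsat: "\<delta> \<le> measure_pmf.prob (PUR_on_Omega n (nat \<lfloor>c * 2 ^ n\<rfloor>)) {(\<Phi>, r). \<not> satisfiable \<Phi>}"
  shows "1 - 2 * c * 2 powr k / \<delta> \<le> cond_prob_iter c n k"
proof -
  define D where "D = PUR_on_Omega n (nat \<lfloor>c * 2 ^ n\<rfloor>)"
  define l where "l = \<lfloor>log 2 (real n)\<rfloor>"
  let ?U = "{(\<Phi>, r). \<not> satisfiable \<Phi>} :: (clause list \<times> bool \<times> nat) set"
  let ?E = "{(\<Phi>, b, y). \<not> satisfiable \<Phi> \<and> \<not> int y > l + k} :: (clause list \<times> bool \<times> nat) set"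
  have U: "\<delta> \<le> measure_pmf.prob D ?U" "measure_pmf.prob D ?U > 0"
    using unsat \<delta> by (simp_all add: D_def)
  have E: "measure_pmf.prob D ?E \<le> 2 * c * 2 powr k"
    unfolding D_def l_def by (rule prob_unsat_few_iterations_le[OF c n])
  have "{(\<Phi>, b, y). \<not> satisfiable \<Phi> \<and> int y > l + k} = ?U - ?E" by auto
  then have "cond_prob_iter c n k = (measure_pmf.prob D ?U - measure_pmf.prob D ?E) / measure_pmf.prob D ?U"
    unfolding cond_prob_iter_def Let_def D_def[symmetric] l_def[symmetric]
    by (simp add: measure_pmf.finite_measure_Diff subset_eq)
  also have "\<dots> = 1 - measure_pmf.prob D ?E / measure_pmf.prob D ?U"
    using U by (simp add: diff_divide_distrib)
  finally have eq: "cond_prob_iter c n k = 1 - measure_pmf.prob D ?E / measure_pmf.prob D ?U" .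
  have "measure_pmf.prob D ?E / measure_pmf.prob D ?U \<le> 2 * c * 2 powr k / \<delta>"
    using E U \<delta> c by (intro frac_le) auto
  then show ?thesis unfolding eq by linarith
qed

lemma tendsto_one_minus_powr_at_bot:
  fixes a b :: real
  shows "((\<lambda>k::int. ereal (1 - a * 2 powr k / b)) \<longlongrightarrow> ereal 1) at_bot"
proof -
  have "((\<lambda>k::int. 2 powr real_of_int k) \<longlongrightarrow> 0) at_bot"
    by (rule filterlim_compose[OF _ filterlim_real_of_int_at_bot]) real_asymp
  then have "((\<lambda>k::int. a * 2 powr k / b) \<longlongrightarrow> 0) at_bot"
    by (intro tendsto_divide_zero tendsto_mult_right_zero)
  then have "((\<lambda>k::int. 1 - a * 2 powr k / b) \<longlongrightarrow> 1 - 0) at_bot"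
    by (intro tendsto_diff tendsto_const)
  then show ?thesis by simp
qed

theorem mainTheorem11:
  fixes c :: real
  assumes "c > 0"
  shows "((\<lambda>k::int. liminf (\<lambda>n. ereal (cond_prob_iter c n k))) \<longlongrightarrow> ereal 1) at_bot"
proof -
  obtain \<delta> where \<delta>: "\<delta> > 0" and unsat: "eventually (\<lambda>n. \<delta> \<le> measure_pmf.prob
      (PUR_on_Omega n (nat \<lfloor>c * 2 ^ n\<rfloor>)) {(\<Phi>, r). \<not> satisfiable \<Phi>}) sequentially"
    using prob_unsat_bounded_below[OF assms] by blast
  define f where "f k = ereal (1 - 2 * c * 2 powr k / \<delta>)" for k :: int
  have lower: "f k \<le> liminf (\<lambda>n. ereal (cond_prob_iter c n k))" for k
  proof (rule Liminf_bounded)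
    show "eventually (\<lambda>n. f k \<le> ereal (cond_prob_iter c n k)) sequentially"
      using unsat eventually_ge_at_top[of 1]
      by eventually_elim (auto simp: f_def intro: cond_prob_iter_ge[OF assms _ \<delta>])
  qed
  have upper: "liminf (\<lambda>n. ereal (cond_prob_iter c n k)) \<le> ereal 1" for k
    by (rule Liminf_le) (auto simp: cond_prob_iter_le_1)
  have "(f \<longlongrightarrow> ereal 1) at_bot"
    unfolding f_def by (rule tendsto_one_minus_powr_at_bot)
  then show ?thesis
    by (rule tendsto_sandwich[of f _ _ "\<lambda>_. ereal 1", rotated 2])
       (use lower upper in \<open>auto intro: always_eventually\<close>)
qed

end
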